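(* Let $(X,d)$ be a non-empty complete metric space and let $T:X\to X$ be a strong contraction mapping. Let $x_0\in X$ be arbitrary and define the sequence $(x_i)_{i\ge0}$ by $x_i=T(x_{i-1})$ for $i\ge1$. Then $(x_i)$ is a Cauchy sequence in $(X,d)$, and hence converges to a limit $x^*\in X$.
   Context: For a subset $A$ of a metric space $(X,d)$, its diameter is $D(A):=\sup\{d(x,y): x,y\in A\}$. Given a self-map $T:X\to X$, set $X_0:=X$ and $X_{i+1}:=T(X_i)$ for $i\ge 0$. The map $T$ is called a strong contraction mapping if $X_{i+1}\subseteq X_i$ for all $i\ge0$ and there exists $q\in[0,1)$ such that $D(X_{i+1})\le q\,D(X_i)$ for all $i\ge 0$. *)

theory Defs
  imports "HOL-Analysis.Analysis"
begin

definition diam_e :: "'a::metric_space set \<Rightarrow> ereal" where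
  "diam_e A = (SUP p\<in>A \<times> A. ereal (dist (fst p) (snd p)))"

definition iter_img :: "('a \<Rightarrow> 'a) \<Rightarrow> nat \<Rightarrow> 'a set" where
  "iter_img T i = (T ^^ i) ` UNIV"

text \<open>Strong contraction mapping. The inequality D(X_{i+1}) <= q D(X_i) is read as an
  inequality of real numbers, i.e. the diameters D(X_i) are finite.\<close>
definition strong_contraction :: "('a::metric_space \<Rightarrow> 'a) \<Rightarrow> bool" where
  "strong_contraction T \<longleftrightarrow>
     (\<forall>i. iter_img T (Suc i) \<subseteq> iter_img T i) \<and>
     (\<forall>i. diam_e (iter_img T i) < \<infinity>) \<and>
     (\<exists>q::real. 0 \<le> q \<and> q < 1 \<and>
        (\<forall>i. diam_e (iter_img T (Suc i)) \<le> ereal q * diam_e (iter_img T i)))"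

end

theory Submission
  imports Defs
begin

text \<open>The n-th iterate x_n = T^n(x_0) lies in X_n, and the sets X_n are nested. Hence for
  m, n \<ge> N both x_m and x_n lie in X_N, so d(x_m, x_n) \<le> D(X_N) \<le> q^N D(X), which tends
  to 0 because D(X) is finite.\<close>

lemma funpow_mem_iter_img: "(T ^^ n) x \<in> iter_img T n"
  unfolding iter_img_def by simp

lemma dist_le_diam_e:
  assumes "a \<in> A" "b \<in> A"
  shows "ereal (dist a b) \<le> diam_e A"
  unfolding diam_e_def by (rule SUP_upper2[of "(a, b)"]) (use assms in auto)

lemma diam_e_nonneg:
  assumes "A \<noteq> {}"
  shows "0 \<le> diam_e A"
proof -
  obtain a where "a \<in> A" using assms by blast
  then show ?thesis using dist_le_diam_e[of a A a] by (simp add: zero_ereal_def)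
qed

lemma ereal_geometric_bound:
  fixes d :: "nat \<Rightarrow> ereal"
  assumes "0 \<le> q" "d 0 \<le> ereal c" "\<And>n. d (Suc n) \<le> ereal q * d n"
  shows "d n \<le> ereal (q ^ n * c)"
proof (induction n)
  case 0
  then show ?case using assms(2) by simp
next
  case (Suc n)
  have "d (Suc n) \<le> ereal q * d n" by (rule assms(3))
  also have "\<dots> \<le> ereal q * ereal (q ^ n * c)"
    by (rule ereal_mult_left_mono[OF Suc]) (use assms(1) in simp)
  also have "\<dots> = ereal (q ^ Suc n * c)" by simp
  finally show ?case .
qed

lemma strong_contraction_diam_bound:
  assumes "strong_contraction T"
  obtains q D where "0 \<le> q" "q < 1" "\<And>n. diam_e (iter_img T n) \<le> ereal (q ^ n * D)"
proof -
  obtain q :: real where q: "0 \<le> q" "q < 1"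
    and step: "\<And>n. diam_e (iter_img T (Suc n)) \<le> ereal q * diam_e (iter_img T n)"
    using assms unfolding strong_contraction_def by auto
  have "0 \<le> diam_e (iter_img T 0)"
    by (rule diam_e_nonneg) (simp add: iter_img_def)
  moreover have "diam_e (iter_img T 0) < \<infinity>"
    using assms unfolding strong_contraction_def by blast
  ultimately obtain D where "diam_e (iter_img T 0) = ereal D"
    by (cases "diam_e (iter_img T 0)") auto
  then have "diam_e (iter_img T n) \<le> ereal (q ^ n * D)" for n
    using ereal_geometric_bound[of q "\<lambda>n. diam_e (iter_img T n)" D, OF q(1) _ step] by simp
  then show ?thesis by (rule that[OF q])
qed

lemma Cauchy_if_tail_dist_le:
  fixes x :: "nat \<Rightarrow> 'a::metric_space"
  assumes "r \<longlonglongrightarrow> 0" and "\<And>N m n. N \<le> m \<Longrightarrow> N \<le> n \<Longrightarrow> dist (x m) (x n) \<le> r N"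
  shows "Cauchy x"
proof (rule metric_CauchyI)
  fix e :: real
  assume "0 < e"
  then obtain N where "\<forall>n\<ge>N. norm (r n - 0) < e"
    using assms(1) unfolding LIMSEQ_iff by blast
  then have "r N < e" by auto
  then show "\<exists>M. \<forall>m\<ge>M. \<forall>n\<ge>M. dist (x m) (x n) < e"
    using assms(2) by (meson le_less_trans)
qed

lemma strong_contraction_orbit_Cauchy:
  fixes T :: "'a::metric_space \<Rightarrow> 'a"
  assumes "strong_contraction T"
  shows "Cauchy (\<lambda>n. (T ^^ n) x0)"
proof -
  obtain q D where q: "0 \<le> q" "q < 1"
    and diam: "\<And>n. diam_e (iter_img T n) \<le> ereal (q ^ n * D)"
    using strong_contraction_diam_bound[OF assms] by metis
  have nested: "decseq (iter_img T)"
    using assms unfolding strong_contraction_def by (intro decseq_SucI) auto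
  have "dist ((T ^^ m) x0) ((T ^^ n) x0) \<le> q ^ N * D" if "N \<le> m" "N \<le> n" for N m n
  proof -
    have "(T ^^ m) x0 \<in> iter_img T N" "(T ^^ n) x0 \<in> iter_img T N"
      using decseqD[OF nested that(1)] decseqD[OF nested that(2)]
        funpow_mem_iter_img[of m T x0] funpow_mem_iter_img[of n T x0] by auto
    then have "ereal (dist ((T ^^ m) x0) ((T ^^ n) x0)) \<le> diam_e (iter_img T N)"
      by (rule dist_le_diam_e)
    also have "\<dots> \<le> ereal (q ^ N * D)" by (rule diam)
    finally show ?thesis by simp
  qed
  moreover have "(\<lambda>N. q ^ N * D) \<longlonglongrightarrow> 0"
    using q by (intro tendsto_mult_left_zero LIMSEQ_power_zero) simp
  ultimately show ?thesis by (intro Cauchy_if_tail_dist_le)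
qed

theorem lemma1:
  fixes T :: "'a::complete_space \<Rightarrow> 'a" and x0 :: 'a and x :: "nat \<Rightarrow> 'a"
  assumes "strong_contraction T"
    and "x 0 = x0"
    and "\<And>i. i \<ge> 1 \<Longrightarrow> x i = T (x (i - 1))"
  shows "Cauchy x \<and> (\<exists>xs. x \<longlonglongrightarrow> xs)"
proof -
  have "x = (\<lambda>n. (T ^^ n) x0)"
  proof
    fix n
    show "x n = (T ^^ n) x0"
    proof (induction n)
      case 0
      then show ?case using assms(2) by simp
    next
      case (Suc n)
      then show ?case using assms(3)[of "Suc n"] by simp
    qed
  qed
  then have "Cauchy x"
    using strong_contraction_orbit_Cauchy[OF assms(1)] by simp
  then show ?thesis using Cauchy_convergent_iff convergent_def by blast
qed

end
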